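(* Let $A\in\mathbb{R}^{m\times n}$ with $m>n$ be a full-rank standardized matrix with no two distinct rows parallel, let $x\in\mathbb{R}^n$, and let $b=Ax$. Let $x_{k-1}$ be the $(k-1)$-st iterate of the two-subspace Kaczmarz method, and let $x_k$ be the next iterate. Then, conditionally on $x_{k-1}$, $$\mathbb{E}\|x-x_k\|_2^2\le\left(1-\frac1R\right)^2\|x-x_{k-1}\|_2^2-\frac{1}{m^2-m}\sum_{r<s}C_{r,s}^2\left(\langle x-x_{k-1},a_r\rangle^2+\langle x-x_{k-1},a_s\rangle^2\right),$$ where $\mu_{r,s}=\langle a_r,a_s\rangle$ and $C_{r,s}=\frac{|\mu_{r,s}|-\mu_{r,s}^2}{\sqrt{1-\mu_{r,s}^2}}$.
   Context: $A\in\mathbb{R}^{m\times n}$ has rows $a_1,\dots,a_m$. It is called standardized if $\|a_i\|_2=1$ for all $i$. "No two distinct rows parallel" means $|\langle a_r,a_s\rangle|<1$ for all $r\ne s$. Two-subspace Kaczmarz method for $(A,b)$, $b\in\mathbb{R}^m$: start from $x_0\in\mathbb{R}^n$. For $k=1,2,\dots$, choose an ordered pair $(r,s)$ of distinct indices in $\{1,\dots,m\}$ uniformly at random among the $m^2-m$ such pairs, independently of all previous choices. Then set $\mu_k=\langle a_r,a_s\rangle$, $y_k=x_{k-1}+(b_s-\langle x_{k-1},a_s\rangle)a_s$, $v_k=\frac{a_r-\mu_k a_s}{\sqrt{1-\mu_k^2}}$, $\beta_k=\frac{b_r-b_s\mu_k}{\sqrt{1-\mu_k^2}}$, and $x_k=y_k+(\beta_k-\langle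 y_k,v_k\rangle)v_k$. Scaled condition number: $R=\|A\|_F^2\|A^{-1}\|^2$, where $\|A^{-1}\|=\inf\{M: M\|Az\|_2\ge\|z\|_2\ \text{for all } z\}$, i.e. the reciprocal of the smallest singular value of $A$. *)

theory Defs
  imports "HOL-Analysis.Analysis" "HOL-Probability.Probability"
begin

definition frob_sq :: "real^'n^'m \<Rightarrow> real" where
  "frob_sq A = (\<Sum>i\<in>UNIV. \<Sum>j\<in>UNIV. (A $ i $ j)^2)"

definition inv_norm :: "real^'n^'m \<Rightarrow> real" where
  "inv_norm A = Inf {M. \<forall>z. M * norm (A *v z) \<ge> norm z}"

definition scaled_cond :: "real^'n^'m \<Rightarrow> real" where
  "scaled_cond A = frob_sq A * (inv_norm A)^2"

definition tsk_step :: "real^'n^'m \<Rightarrow> real^'m \<Rightarrow> real^'n \<Rightarrow> 'm \<Rightarrow> 'm \<Rightarrow> real^'n" where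
  "tsk_step A b xp r s =
    (let mu = inner (A $ r) (A $ s);
         y = xp + (b $ s - inner xp (A $ s)) *\<^sub>R (A $ s);
         v = (1 / sqrt (1 - mu^2)) *\<^sub>R (A $ r - mu *\<^sub>R (A $ s));
         beta = (b $ r - b $ s * mu) / sqrt (1 - mu^2)
     in y + (beta - inner y v) *\<^sub>R v)"

definition Ccoef :: "real^'n^'m \<Rightarrow> 'm \<Rightarrow> 'm \<Rightarrow> real" where
  "Ccoef A r s = (let mu = inner (A $ r) (A $ s) in (\<bar>mu\<bar> - mu^2) / sqrt (1 - mu^2))"

end

theory Submission imports Defs begin

(*
  Write e = x - x_{k-1}, a_i for the rows of A, alpha_i = <e, a_i> and mu_rs = <a_r, a_s>.
  One step with the pair (r,s) projects onto two hyperplanes through x along the orthonormal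
  directions a_s and v = (a_r - mu a_s)/sqrt(1 - mu^2), so the new squared error is
     |e|^2 - alpha_s^2 - (alpha_r - mu alpha_s)^2 / (1 - mu^2)
   = [|e|^2 - alpha_s^2 - (alpha_r - mu alpha_s)^2] - mu^2 (alpha_r - mu alpha_s)^2 / (1 - mu^2).
  Summed over all ordered pairs, the bracket is the error of two successive one-subspace
  projections; writing h_s = e - alpha_s a_s it equals sum_s ((m-1)|h_s|^2 - |A h_s|^2), which the
  bound |z| <= ||A^-1|| |Az| controls by (m^2-m)(1 - 1/R)^2 |e|^2.  The remaining terms, grouped
  by unordered pairs r < s, dominate C_rs^2 (alpha_r^2 + alpha_s^2) by a scalar inequality.
*)

section \<open>The error after one two-subspace step\<close>

lemma two_subspace_error:
  fixes u w x xp :: "'a::real_inner"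
  assumes nu: "norm u = 1" and nw: "norm w = 1" and mu1: "\<bar>inner u w\<bar> < 1"
  shows "norm (x - (let mu = inner u w;
         y = xp + (inner w x - inner xp w) *\<^sub>R w;
         v = (1 / sqrt (1 - mu^2)) *\<^sub>R (u - mu *\<^sub>R w);
         beta = (inner u x - inner w x * mu) / sqrt (1 - mu^2)
     in y + (beta - inner y v) *\<^sub>R v))^2
   = norm (x - xp)^2 - (inner (x - xp) w)^2
     - (inner (x - xp) u - inner u w * inner (x - xp) w)^2 / (1 - (inner u w)^2)"
proof -
  define mu where "mu = inner u w"
  define q where "q = sqrt (1 - mu^2)"
  define e where "e = x - xp"
  define be where "be = inner e w"
  define al where "al = inner e u"
  define y where "y = xp + (inner w x - inner xp w) *\<^sub>R w"
  define v where "v = (1 / q) *\<^sub>R (u - mu *\<^sub>R w)"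
  have m2: "mu^2 < 1" using mu1 unfolding mu_def by (simp add: abs_square_less_1)
  have qpos: "q > 0" using m2 unfolding q_def by simp
  have q2: "q^2 = 1 - mu^2" using m2 unfolding q_def by simp
  have uu: "inner u u = 1" using nu by (simp add: dot_square_norm)
  have ww: "inner w w = 1" using nw by (simp add: dot_square_norm)
  have wu: "inner w u = mu" by (simp add: mu_def inner_commute)
  have xy: "x - y = e - be *\<^sub>R w"
    unfolding y_def e_def be_def by (simp add: inner_diff_left inner_commute algebra_simps)
  have vv: "inner v v = 1"
  proof -
    have "inner v v = (1/q^2) * (inner u u - 2*mu*inner u w + mu^2 * inner w w)"
      unfolding v_def
      by (simp add: inner_diff_left inner_diff_right wu mu_def[symmetric] power2_eq_square algebra_simps)
    also have "\<dots> = 1" using uu ww qpos q2 by (simp add: mu_def[symmetric] field_simps power2_eq_square)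
    finally show ?thesis .
  qed
  have wv: "inner w v = 0"
    unfolding v_def by (simp add: inner_diff_right ww wu)
  have ev: "inner e v = (al - mu*be) / q"
    unfolding v_def al_def be_def by (simp add: inner_diff_right inner_commute divide_simps)
  \<comment> \<open>beta is the component of x along v, so the second projection adds the component of
    x - y along v.\<close>
  have beta: "(inner u x - inner w x * mu) / q = inner x v"
    unfolding v_def by (simp add: inner_diff_right inner_diff_left inner_commute divide_simps algebra_simps)
  have coeff: "(inner u x - inner w x * mu) / q - inner y v = (al - mu*be)/q"
  proof -
    have "inner x v - inner y v = inner (x - y) v" by (simp add: inner_diff_left)
    also have "\<dots> = inner e v" using xy wv by (simp add: inner_diff_left)
    finally show ?thesis using beta ev by simp
  qed
  have "x - (y + ((inner u x - inner w x * mu) / q - inner y v) *\<^sub>R v)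
      = (e - be *\<^sub>R w) - ((al - mu*be)/q) *\<^sub>R v"
    using coeff xy by (simp add: algebra_simps)
  hence "norm (x - (y + ((inner u x - inner w x * mu) / q - inner y v) *\<^sub>R v))^2
       = inner ((e - be *\<^sub>R w) - ((al - mu*be)/q) *\<^sub>R v) ((e - be *\<^sub>R w) - ((al - mu*be)/q) *\<^sub>R v)"
    by (simp add: dot_square_norm)
  also have "\<dots> = inner e e - be^2 - ((al - mu*be)/q)^2"
    using vv wv ev ww
    by (simp add: inner_diff_left inner_diff_right inner_commute be_def power2_eq_square algebra_simps)
  also have "\<dots> = norm (x - xp)^2 - (inner (x - xp) w)^2
     - (inner (x - xp) u - inner u w * inner (x - xp) w)^2 / (1 - (inner u w)^2)"
    using q2 by (simp add: e_def be_def al_def mu_def[symmetric] dot_square_norm power_divide)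
  finally show ?thesis
    unfolding Let_def mu_def[symmetric] q_def[symmetric] y_def[symmetric] v_def[symmetric] by simp
qed

text \<open>The same formula for the matrix form of the method, split into the error of two successive
  one-subspace projections (onto a_s, then a_r) minus an extra gain term.\<close>
lemma tsk_step_error:
  fixes A :: "real^'n^'m" and x xp :: "real^'n"
  assumes "\<forall>i. norm (A $ i) = 1" and "\<bar>inner (A $ r) (A $ s)\<bar> < 1"
  defines "e \<equiv> x - xp" and "mu \<equiv> inner (A $ r) (A $ s)"
  shows "norm (x - tsk_step A (A *v x) xp r s)^2
       = (norm e^2 - (inner e (A $ s))^2 - (inner e (A $ r) - mu * inner e (A $ s))^2)
         - mu^2 * (inner e (A $ r) - mu * inner e (A $ s))^2 / (1 - mu^2)"
proof -
  define c where "c = inner e (A $ r) - mu * inner e (A $ s)"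
  have "tsk_step A (A *v x) xp r s =
      (let mu = inner (A $ r) (A $ s);
         y = xp + (inner (A $ s) x - inner xp (A $ s)) *\<^sub>R (A $ s);
         v = (1 / sqrt (1 - mu^2)) *\<^sub>R (A $ r - mu *\<^sub>R (A $ s));
         beta = (inner (A $ r) x - inner (A $ s) x * mu) / sqrt (1 - mu^2)
     in y + (beta - inner y v) *\<^sub>R v)"
    by (simp only: tsk_step_def matrix_vector_mul_component)
  hence "norm (x - tsk_step A (A *v x) xp r s)^2 = norm e^2 - (inner e (A $ s))^2 - c^2 / (1 - mu^2)"
    using two_subspace_error[of "A $ r" "A $ s" x xp] assms(1,2)
    by (simp add: e_def mu_def c_def)
  moreover have "c^2 / (1 - mu^2) = c^2 + mu^2 * c^2 / (1 - mu^2)"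
  proof -
    have "1 - mu^2 > 0" using assms(2) by (simp add: mu_def abs_square_less_1)
    thus ?thesis by (simp add: field_simps)
  qed
  ultimately show ?thesis by (simp add: c_def)
qed

lemma sum_offdiag:
  fixes F :: "'m::finite \<times> 'm \<Rightarrow> 'a::ab_group_add"
  shows "(\<Sum>p\<in>{(r,s). r\<noteq>s}. F p) = (\<Sum>s\<in>UNIV. \<Sum>r\<in>UNIV. F (r,s)) - (\<Sum>s\<in>UNIV. F (s,s))"
proof -
  have U: "(UNIV :: ('m\<times>'m) set) = {(r,s). r\<noteq>s} \<union> range (\<lambda>s. (s,s))" by auto
  have "(\<Sum>p\<in>UNIV. F p) = (\<Sum>p\<in>{(r,s). r\<noteq>s}. F p) + (\<Sum>p\<in>range (\<lambda>s. (s,s)). F p)"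
    unfolding U by (rule sum.union_disjoint) auto
  moreover have "(\<Sum>p\<in>range (\<lambda>s. (s,s)). F p) = (\<Sum>s\<in>UNIV. F (s,s))"
    by (subst sum.reindex) (auto simp: inj_on_def)
  moreover have "(\<Sum>p\<in>UNIV. F p) = (\<Sum>s\<in>UNIV. \<Sum>r\<in>UNIV. F (r,s))"
  proof -
    have "(\<Sum>s\<in>UNIV. \<Sum>r\<in>UNIV. F (r,s)) = (\<Sum>r\<in>UNIV. \<Sum>s\<in>UNIV. F (r,s))" by (rule sum.swap)
    also have "\<dots> = (\<Sum>(r,s)\<in>UNIV\<times>UNIV. F (r,s))" by (rule sum.cartesian_product)
    finally show ?thesis by (simp add: UNIV_Times_UNIV)
  qed
  ultimately show ?thesis by (simp add: algebra_simps)
qed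

lemma card_offdiag: "card {(r,s::'m::finite). r\<noteq>s} = CARD('m) * CARD('m) - CARD('m)"
proof -
  have U: "{(r,s::'m). r\<noteq>s} = UNIV - range (\<lambda>s. (s,s))" by auto
  have "card (range (\<lambda>s::'m. (s,s))) = CARD('m)" by (subst card_image) (auto simp: inj_on_def)
  thus ?thesis unfolding U
    by (subst card_Diff_subset)
       (auto simp: card_cartesian_product UNIV_Times_UNIV[symmetric] simp del: UNIV_Times_UNIV)
qed

lemma sum_offdiag_ordered:
  fixes G :: "'m::{finite,linorder} \<Rightarrow> 'm \<Rightarrow> 'a::comm_monoid_add"
  shows "(\<Sum>(r,s)\<in>{(r,s). r\<noteq>s}. G r s) = (\<Sum>(r,s)\<in>{(r,s). r<s}. G r s + G s r)"
proof -
  have split: "{(r::'m, s). r \<noteq> s} = {(r, s). r < s} \<union> prod.swap ` {(r, s). r < s}"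
    by (auto simp: neq_iff)
  have "(\<Sum>(r,s)\<in>{(r,s). r\<noteq>s}. G r s)
      = (\<Sum>(r,s)\<in>{(r::'m,s). r<s}. G r s) + (\<Sum>(r,s)\<in>prod.swap ` {(r::'m,s). r<s}. G r s)"
    unfolding split by (rule sum.union_disjoint) auto
  also have "(\<Sum>(r,s)\<in>prod.swap ` {(r::'m,s). r<s}. G r s) = (\<Sum>(r,s)\<in>{(r::'m,s). r<s}. G s r)"
    by (subst sum.reindex) (auto simp: inj_on_def case_prod_unfold)
  finally show ?thesis by (simp add: sum.distrib case_prod_unfold)
qed

section \<open>The one-subspace part\<close>

lemma norm_matrix_vector_sq:
  fixes A :: "real^'n^'m"
  shows "norm (A *v z)^2 = (\<Sum>i\<in>UNIV. (inner (A $ i) z)^2)"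
proof -
  have "norm (A *v z)^2 = (\<Sum>i\<in>UNIV. (A *v z) $ i * (A *v z) $ i)"
    by (simp only: dot_square_norm[symmetric] inner_vec_def inner_real_def)
  thus ?thesis by (simp only: matrix_vector_mul_component power2_eq_square)
qed

text \<open>For an injective A the set of admissible constants M is nonempty and bounded below by
  |z|/|A z|, so its infimum ||A^-1|| is itself an admissible constant.\<close>
lemma inv_norm_bound:
  fixes A :: "real^'n^'m"
  assumes "inj ((*v) A)"
  shows "norm z \<le> inv_norm A * norm (A *v z)"
proof -
  let ?M = "{M. \<forall>z. M * norm (A *v z) \<ge> norm z}"
  obtain B where B: "B > 0" "\<And>x. B * norm x \<le> norm (A *v x)"
    using linear_inj_bounded_below_pos[of "(*v) A"] assms by (auto simp: matrix_vector_mul_linear)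
  have "1/B \<in> ?M" using B by (simp add: pos_le_divide_eq mult.commute)
  hence ne: "?M \<noteq> {}" by blast
  show ?thesis
  proof (cases "A *v z = 0")
    case True
    hence "z = 0" using B(2)[of z] B(1) by (simp add: mult_le_0_iff)
    thus ?thesis by simp
  next
    case False
    hence np: "norm (A *v z) > 0" by simp
    have "norm z / norm (A *v z) \<le> inv_norm A"
      unfolding inv_norm_def
    proof (rule cInf_greatest[OF ne])
      fix M assume "M \<in> ?M"
      thus "norm z / norm (A *v z) \<le> M" using np by (simp add: divide_le_eq)
    qed
    thus ?thesis using np by (simp add: divide_le_eq mult.commute)
  qed
qed

text \<open>With unit rows, |A z|^2 <= m |z|^2; hence any K with |z| <= K |A z| satisfies m K^2 >= 1,
  which makes the contraction factor 1 - 1/(m K^2) nonnegative.\<close>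
lemma scaled_bound_ge_1:
  fixes A :: "real^'n^'m"
  assumes unit: "\<forall>i. norm (A $ i) = 1" and K: "\<And>z. norm z \<le> K * norm (A *v z)"
  shows "1 \<le> real CARD('m) * K^2"
proof -
  obtain j :: 'n where True by simp
  define z :: "real^'n" where "z = axis j 1"
  have "(inner (A $ i) z)^2 \<le> 1" for i
  proof -
    have "\<bar>inner (A $ i) z\<bar> \<le> norm (A $ i) * norm z" by (rule Cauchy_Schwarz_ineq2)
    thus ?thesis using unit by (simp add: z_def abs_square_le_1)
  qed
  hence "norm (A *v z)^2 \<le> real CARD('m)"
    using sum_mono[of UNIV "\<lambda>i. (inner (A $ i) z)^2" "\<lambda>_. 1"] by (simp add: norm_matrix_vector_sq)
  have "1 \<le> K^2 * norm (A *v z)^2"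
    using power_mono[OF K[of z], of 2] by (simp add: z_def power_mult_distrib)
  also have "\<dots> \<le> K^2 * real CARD('m)"
    using \<open>norm (A *v z)^2 \<le> real CARD('m)\<close> by (rule mult_left_mono) simp
  finally show ?thesis by (simp add: mult.commute)
qed

definition orth_resid :: "'a::real_inner \<Rightarrow> 'a \<Rightarrow> 'a" where
  "orth_resid a e = e - inner e a *\<^sub>R a"

lemma orth_resid_norm:
  assumes "norm a = 1"
  shows "norm (orth_resid a e)^2 = norm e^2 - (inner e a)^2"
proof -
  have aa: "inner a a = 1" using assms power2_norm_eq_inner[of a] by simp
  have "norm (orth_resid a e)^2 = inner (orth_resid a e) (orth_resid a e)"
    by (rule power2_norm_eq_inner)
  also have "\<dots> = inner e e - 2 * (inner e a)^2 + (inner e a)^2 * inner a a"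
    by (simp add: orth_resid_def inner_diff_left inner_diff_right inner_commute
        power2_eq_square algebra_simps)
  finally show ?thesis using aa by (simp add: power2_norm_eq_inner)
qed

lemma orth_resid_inner: "inner (orth_resid a e) b = inner e b - inner e a * inner a b"
  by (simp add: orth_resid_def inner_diff_left)

text \<open>The sum over all ordered pairs of the error after two one-subspace projections
  (first onto row s, then onto row r).\<close>
definition one_subspace_sum :: "real^'n^'m \<Rightarrow> real^'n \<Rightarrow> real" where
  "one_subspace_sum A e = (\<Sum>(r,s)\<in>{(r,s). r\<noteq>s}. norm e^2 - (inner e (A $ s))^2
      - (inner e (A $ r) - inner (A $ r) (A $ s) * inner e (A $ s))^2)"

text \<open>In terms of the residuals h_s = e - <e,a_s> a_s the inner sum over r runs over all rows
  except s, and <h_s, a_s> = 0, so it is (m-1)|h_s|^2 - |A h_s|^2.\<close>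
lemma one_subspace_sum_resid:
  fixes A :: "real^'n^'m::finite" and e :: "real^'n"
  assumes unit: "\<forall>i. norm (A $ i) = 1"
  shows "one_subspace_sum A e
       = (\<Sum>s\<in>UNIV. (real CARD('m) - 1) * norm (orth_resid (A $ s) e)^2
            - norm (A *v orth_resid (A $ s) e)^2)"
proof -
  let ?h = "\<lambda>s. orth_resid (A $ s) e"
  have row_inner: "inner (A $ r) (?h s) = inner e (A $ r) - inner (A $ r) (A $ s) * inner e (A $ s)"
    for r s
  proof -
    have "inner (A $ r) (?h s) = inner e (A $ r) - inner e (A $ s) * inner (A $ s) (A $ r)"
      by (simp add: inner_commute[of "A $ r"] orth_resid_inner)
    thus ?thesis by (simp add: inner_commute[of "A $ s" "A $ r"])
  qed
  have diag: "inner (A $ s) (?h s) = 0" for s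
    using unit row_inner[of s s] by (simp add: power2_norm_eq_inner[symmetric])
  have pair_term: "norm e^2 - (inner e (A $ s))^2
        - (inner e (A $ r) - inner (A $ r) (A $ s) * inner e (A $ s))^2
      = norm (?h s)^2 - (inner (A $ r) (?h s))^2" for r s
    using unit by (simp add: orth_resid_norm row_inner)
  have row_sum: "(\<Sum>r\<in>UNIV. norm (?h s)^2 - (inner (A $ r) (?h s))^2)
      = real CARD('m) * norm (?h s)^2 - norm (A *v ?h s)^2" for s
    by (simp add: sum_subtractf norm_matrix_vector_sq)
  have "one_subspace_sum A e = (\<Sum>(r,s)\<in>{(r,s). r\<noteq>s}. norm (?h s)^2 - (inner (A $ r) (?h s))^2)"
    unfolding one_subspace_sum_def by (simp only: pair_term)
  also have "\<dots> = (\<Sum>s\<in>UNIV. \<Sum>r\<in>UNIV. norm (?h s)^2 - (inner (A $ r) (?h s))^2)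
      - (\<Sum>s\<in>UNIV. norm (?h s)^2)"
    by (simp add: sum_offdiag diag)
  also have "\<dots> = (\<Sum>s\<in>UNIV. real CARD('m) * norm (?h s)^2 - norm (A *v ?h s)^2)
      - (\<Sum>s\<in>UNIV. norm (?h s)^2)"
    by (simp only: row_sum)
  finally show ?thesis by (simp add: sum_subtractf left_diff_distrib)
qed

lemma one_subspace_contraction:
  fixes m K a b :: real
  assumes "m \<ge> 1" and "K^2 > 0" and "a \<ge> 0" and "a \<le> K^2 * b"
  shows "(m - 1) * a - b \<le> (m - 1) * (1 - 1 / (m * K^2)) * a"
proof -
  have "(m - 1) * (a / (m * K^2)) = ((m - 1) / m) * (a / K^2)"
    using assms(1,2) by (simp add: field_simps)
  also have "\<dots> \<le> a / K^2"
    using assms by (intro mult_left_le_one_le) (auto simp: divide_le_eq)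
  also have "\<dots> \<le> b" using assms(2,4) by (simp add: divide_le_eq mult.commute)
  finally show ?thesis by (simp add: algebra_simps)
qed

lemma one_subspace_sum_bound:
  fixes A :: "real^'n^'m::finite" and e :: "real^'n"
  assumes unit: "\<forall>i. norm (A $ i) = 1" and K: "\<And>z. norm z \<le> K * norm (A *v z)"
  defines "m \<equiv> real CARD('m)"
  shows "one_subspace_sum A e \<le> (m * m - m) * (1 - 1 / (m * K^2))^2 * norm e^2"
proof -
  define t where "t = 1 - 1 / (m * K^2)"
  let ?h = "\<lambda>s. orth_resid (A $ s) e"
  have mK: "1 \<le> m * K^2" using scaled_bound_ge_1[OF unit K] by (simp add: m_def)
  have m1: "m \<ge> 1" by (simp add: m_def)
  have K2: "K^2 > 0" using mK by (cases "K = 0") auto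
  have t0: "t \<ge> 0" using mK by (simp add: t_def)
  have Ksq: "norm z^2 \<le> K^2 * norm (A *v z)^2" for z
    using power_mono[OF K[of z]] by (simp add: power_mult_distrib)
  have resid_sum: "(\<Sum>s\<in>UNIV. norm (?h s)^2) \<le> m * t * norm e^2"
  proof -
    have "(\<Sum>s\<in>UNIV. norm (?h s)^2) = m * norm e^2 - norm (A *v e)^2"
      using unit by (simp add: orth_resid_norm sum_subtractf norm_matrix_vector_sq m_def inner_commute)
    moreover have "norm e^2 / K^2 \<le> norm (A *v e)^2"
      using Ksq[of e] K2 by (simp add: divide_le_eq mult.commute)
    moreover have "m * t * norm e^2 = m * norm e^2 - norm e^2 / K^2"
      using m1 K2 by (simp add: t_def field_simps)
    ultimately show ?thesis by linarith
  qed
  have "one_subspace_sum A e = (\<Sum>s\<in>UNIV. (m - 1) * norm (?h s)^2 - norm (A *v ?h s)^2)"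
    using one_subspace_sum_resid[OF unit] by (simp add: m_def)
  also have "\<dots> \<le> (\<Sum>s\<in>UNIV. (m - 1) * t * norm (?h s)^2)"
    using one_subspace_contraction[OF m1 K2 _ Ksq] by (intro sum_mono) (simp add: t_def)
  also have "\<dots> = (m - 1) * t * (\<Sum>s\<in>UNIV. norm (?h s)^2)" by (simp add: sum_distrib_left)
  also have "\<dots> \<le> (m - 1) * t * (m * t * norm e^2)"
    using resid_sum m1 t0 by (intro mult_left_mono) auto
  also have "\<dots> = (m * m - m) * t^2 * norm e^2" by (simp add: power2_eq_square algebra_simps)
  finally show ?thesis by (simp add: t_def)
qed

section \<open>The two-subspace gain\<close>

lemma pair_gain_bound:
  fixes mu a b :: real
  assumes "\<bar>mu\<bar> < 1"
  shows "((\<bar>mu\<bar> - mu^2) / sqrt (1 - mu^2))^2 * (a^2 + b^2)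
     \<le> mu^2 * (a - mu*b)^2 / (1 - mu^2) + mu^2 * (b - mu*a)^2 / (1 - mu^2)"
proof -
  have p: "1 - mu^2 > 0" using assms by (simp add: abs_square_less_1)
  \<comment> \<open>The difference of the numerators is 2|mu|^3 (a -+ b)^2.\<close>
  have key: "(\<bar>mu\<bar> - mu^2)^2 * (a^2+b^2) \<le> mu^2 * (a - mu*b)^2 + mu^2 * (b - mu*a)^2"
  proof (cases "mu \<ge> 0")
    case True
    have "mu^2 * (a - mu*b)^2 + mu^2 * (b - mu*a)^2 - (\<bar>mu\<bar> - mu^2)^2 * (a^2+b^2) = 2*mu^3*(a-b)^2"
      using True by (simp add: power2_eq_square power3_eq_cube algebra_simps)
    thus ?thesis using True by (smt (verit) zero_le_mult_iff zero_le_power zero_le_power2)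
  next
    case False
    have "mu^2 * (a - mu*b)^2 + mu^2 * (b - mu*a)^2 - (\<bar>mu\<bar> - mu^2)^2 * (a^2+b^2) = 2*(-mu)^3*(a+b)^2"
      using False by (simp add: power2_eq_square power3_eq_cube algebra_simps)
    thus ?thesis using False by (smt (verit) zero_le_mult_iff zero_le_power zero_le_power2)
  qed
  show ?thesis
    using divide_right_mono[OF key, of "1 - mu^2"] p
    by (simp add: power_divide add_divide_distrib[symmetric])
qed

text \<open>The sum over all ordered pairs of the extra reduction that the two-subspace step achieves
  over two one-subspace projections.\<close>
definition gain_sum :: "real^'n^'m \<Rightarrow> real^'n \<Rightarrow> real" where
  "gain_sum A e = (\<Sum>(r,s)\<in>{(r,s). r\<noteq>s}. (inner (A $ r) (A $ s))^2
      * (inner e (A $ r) - inner (A $ r) (A $ s) * inner e (A $ s))^2 / (1 - (inner (A $ r) (A $ s))^2))"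

lemma gain_sum_bound:
  fixes A :: "real^'n^'m::{finite,linorder}" and e :: "real^'n"
  assumes "\<forall>r s. r \<noteq> s \<longrightarrow> \<bar>inner (A $ r) (A $ s)\<bar> < 1"
  shows "(\<Sum>(r, s)\<in>{(r, s). r < s}. (Ccoef A r s)^2 * ((inner e (A $ r))^2 + (inner e (A $ s))^2))
       \<le> gain_sum A e"
  unfolding gain_sum_def sum_offdiag_ordered
proof (rule sum_mono, clarify)
  fix r s :: 'm assume "r < s"
  with assms have "\<bar>inner (A $ r) (A $ s)\<bar> < 1" by simp
  from pair_gain_bound[OF this, of "inner e (A $ r)" "inner e (A $ s)"]
  show "(Ccoef A r s)^2 * ((inner e (A $ r))^2 + (inner e (A $ s))^2)
     \<le> (inner (A $ r) (A $ s))^2 * (inner e (A $ r) - inner (A $ r) (A $ s) * inner e (A $ s))^2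
          / (1 - (inner (A $ r) (A $ s))^2)
      + (inner (A $ s) (A $ r))^2 * (inner e (A $ s) - inner (A $ s) (A $ r) * inner e (A $ r))^2
          / (1 - (inner (A $ s) (A $ r))^2)"
    by (simp add: Ccoef_def Let_def inner_commute[of "A $ s"])
qed

lemma tsk_error_sum:
  fixes A :: "real^'n^'m::finite" and x xp :: "real^'n"
  assumes "\<forall>i. norm (A $ i) = 1" and "\<forall>r s. r \<noteq> s \<longrightarrow> \<bar>inner (A $ r) (A $ s)\<bar> < 1"
  shows "(\<Sum>(r,s)\<in>{(r,s). r\<noteq>s}. norm (x - tsk_step A (A *v x) xp r s)^2)
       = one_subspace_sum A (x - xp) - gain_sum A (x - xp)"
  unfolding one_subspace_sum_def gain_sum_def sum_subtractf[symmetric]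
  by (rule sum.cong) (use assms in \<open>auto simp: tsk_step_error\<close>)

lemma scaled_cond_standardized:
  fixes A :: "real^'n^'m"
  assumes "\<forall>i. norm (A $ i) = 1"
  shows "scaled_cond A = real CARD('m) * (inv_norm A)^2"
proof -
  have "frob_sq A = (\<Sum>i\<in>UNIV. inner (A $ i) (A $ i))"
    by (simp add: frob_sq_def inner_vec_def power2_eq_square)
  thus ?thesis using assms by (simp add: scaled_cond_def power2_norm_eq_inner[symmetric])
qed

theorem lemma2:
  fixes A :: "real^'n^('m::{finite,linorder})" and x xk1 :: "real^'n"
  assumes "CARD('m) > CARD('n)"
    and "rank A = CARD('n)"
    and "\<forall>i. norm (A $ i) = 1"
    and "\<forall>r s. r \<noteq> s \<longrightarrow> \<bar>inner (A $ r) (A $ s)\<bar> < 1"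
  shows "measure_pmf.expectation (pmf_of_set {(r, s). r \<noteq> s})
           (\<lambda>(r, s). (norm (x - tsk_step A (A *v x) xk1 r s))^2)
         \<le> (1 - 1 / scaled_cond A)^2 * (norm (x - xk1))^2
           - 1 / (real (CARD('m))^2 - real (CARD('m))) *
             (\<Sum>(r, s)\<in>{(r, s). r < s}. (Ccoef A r s)^2 *
                ((inner (x - xk1) (A $ r))^2 + (inner (x - xk1) (A $ s))^2))"
  (is "?E \<le> ?t2 * _ - 1 / ?D * ?Q")
proof -
  define S where "S = {(r::'m, s). r \<noteq> s}"
  have "0 < CARD('n)" by simp
  hence "CARD('m) \<ge> 2" using assms(1) by linarith
  hence D: "?D > 0" "real (card S) = ?D"
    by (auto simp: S_def card_offdiag of_nat_diff power2_eq_square)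
  hence "S \<noteq> {}" by auto
  have K: "norm z \<le> inv_norm A * norm (A *v z)" for z
    using assms(2) full_rank_injective inv_norm_bound by blast
  have "?E = (one_subspace_sum A (x - xk1) - gain_sum A (x - xk1)) / ?D"
    using D \<open>S \<noteq> {}\<close> tsk_error_sum[OF assms(3,4), of x xk1]
    by (simp add: integral_pmf_of_set S_def case_prod_unfold)
  also have "\<dots> \<le> (?D * ?t2 * norm (x - xk1)^2 - ?Q) / ?D"
    using one_subspace_sum_bound[OF assms(3) K, of "x - xk1"] gain_sum_bound[OF assms(4), of "x - xk1"] D(1)
    by (intro divide_right_mono) (simp_all add: scaled_cond_standardized[OF assms(3)] power2_eq_square)
  finally show ?thesis
    using D(1) by (simp add: diff_divide_distrib)
qed

end
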